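(* Let $n_1,n_2\ge 1$ be integers, $n=n_1+n_2$, and consider a uniformly random arrangement of $n_1$ symbols $x$ and $n_2$ symbols $y$ (all $\binom{n}{n_1}$ arrangements equally likely). Let $R_1$ and $R_2$ be the numbers of runs of $x$'s and of $y$'s, respectively, $R_m=\min(R_1,R_2)$ and $R_M=\max(R_1,R_2)$. Then $$\mathrm{Cov}(R_m,R_M)=\frac{n_1n_2(n_1-1)(n_2-1)}{n(n-1)^2}.$$
   Context: A run is a maximal block of consecutive identical symbols in the arrangement. *)

theory Defs
  imports Complex_Main
begin

text \<open>An arrangement of n1 symbols x and n2 symbols y is a boolean list of length n1+n2
  with exactly n1 entries True (True = x, False = y).\<close>
definition arrangements :: "nat \<Rightarrow> nat \<Rightarrow> bool list set" where
  "arrangements n1 n2 = {xs. length xs = n1 + n2 \<and> length (filter id xs) = n1}"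

text \<open>Number of runs (maximal blocks of consecutive equal symbols) of symbol a:
  counted by their starting positions.\<close>
definition runs :: "bool \<Rightarrow> bool list \<Rightarrow> nat" where
  "runs a xs = card {i. i < length xs \<and> xs ! i = a \<and> (i = 0 \<or> xs ! (i - 1) \<noteq> a)}"

definition uexp :: "'a set \<Rightarrow> ('a \<Rightarrow> real) \<Rightarrow> real" where
  "uexp S f = (\<Sum>s\<in>S. f s) / real (card S)"

definition ucov :: "'a set \<Rightarrow> ('a \<Rightarrow> real) \<Rightarrow> ('a \<Rightarrow> real) \<Rightarrow> real" where
  "ucov S f g = uexp S (\<lambda>s. (f s - uexp S f) * (g s - uexp S g))"

end

theory Submission
  imports Defs
begin

text \<open>Runs of the two symbols
  alternate, so \<open>R\<^sub>2 = R\<^sub>1 + 1 - a - b\<close>, where \<open>a\<close>, \<open>b\<close> indicate an \<open>x\<close> in the first and in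
  the last position; hence \<open>min = R\<^sub>1 - ab\<close>, \<open>max = R\<^sub>2 + ab\<close> and \<open>min \<cdot> max = R\<^sub>1 R\<^sub>2\<close>.
  Moreover \<open>R\<^sub>1 = n\<^sub>1 - W\<close>, where \<open>W\<close> counts the adjacent pairs of positions both holding \<open>x\<close>.
  Thus \<open>min\<close>, \<open>max\<close> and their product are polynomials in indicators of events
  ``all positions in \<open>A\<close> hold \<open>x\<close>'', which have probability
  \<open>C(n\<^sub>1,|A|) / C(n,|A|)\<close>. Counting how many pairs \<open>{i, i+1}\<close>, \<open>{j, j+1}\<close> overlap in two,
  one or no positions gives all first and second moments, and the covariance becomes a
  rational identity in \<open>n\<^sub>1\<close> and \<open>n\<close>.\<close>

lemma card_supersets_of_card:
  assumes "finite U" "A \<subseteq> U" "card A \<le> m"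
  shows "card {T. T \<subseteq> U \<and> card T = m \<and> A \<subseteq> T} = (card U - card A) choose (m - card A)"
proof -
  have "finite A" using assms finite_subset by blast
  have "bij_betw (\<lambda>B. B \<union> A) {B. B \<subseteq> U - A \<and> card B = m - card A}
          {T. T \<subseteq> U \<and> card T = m \<and> A \<subseteq> T}"
  proof (rule bij_betw_byWitness[where f' = "\<lambda>T. T - A"])
    show "(\<lambda>B. B \<union> A) ` {B. B \<subseteq> U - A \<and> card B = m - card A}
            \<subseteq> {T. T \<subseteq> U \<and> card T = m \<and> A \<subseteq> T}"
    proof clarify
      fix B assume "B \<subseteq> U - A" "card B = m - card A"
      moreover have "finite B" using \<open>B \<subseteq> U - A\<close> assms(1) finite_subset by blast
      moreover have "card (B \<union> A) = card B + card A"
        using \<open>finite B\<close> \<open>finite A\<close> \<open>B \<subseteq> U - A\<close> by (subst card_Un_disjoint) auto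
      ultimately show "B \<union> A \<subseteq> U \<and> card (B \<union> A) = m \<and> A \<subseteq> B \<union> A"
        using assms by auto
    qed
  qed (use assms \<open>finite A\<close> in \<open>auto simp: card_Diff_subset\<close>)
  then have "card {T. T \<subseteq> U \<and> card T = m \<and> A \<subseteq> T} = card {B. B \<subseteq> U - A \<and> card B = m - card A}"
    by (simp add: bij_betw_same_card)
  also have "\<dots> = (card U - card A) choose (m - card A)"
    using assms \<open>finite A\<close> by (simp add: n_subsets card_Diff_subset)
  finally show ?thesis .
qed

lemma card_supersets_mult_binomial:
  assumes "finite U" "A \<subseteq> U"
  shows "card {T. T \<subseteq> U \<and> card T = m \<and> A \<subseteq> T} * (card U choose card A)
       = (card U choose m) * (m choose card A)"
proof (cases "card A \<le> m")
  case True
  show ?thesis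
  proof (cases "m \<le> card U")
    case True
    then show ?thesis using \<open>card A \<le> m\<close> assms
      using choose_mult[of "card A" m "card U"] by (simp add: card_supersets_of_card mult.commute)
  next
    case False
    have "card A \<le> card U" using assms by (simp add: card_mono)
    then have "card U - card A < m - card A" "card U < m" using False by linarith+
    then have vanish: "(card U - card A) choose (m - card A) = 0" "card U choose m = 0"
      by (simp_all add: binomial_eq_0)
    show ?thesis unfolding card_supersets_of_card[OF assms \<open>card A \<le> m\<close>] vanish by simp
  qed
next
  case False
  have "card A \<le> m" if "T \<subseteq> U" "card T = m" "A \<subseteq> T" for T
    using that card_mono[OF finite_subset[OF _ assms(1)]] by blast
  then have "{T. T \<subseteq> U \<and> card T = m \<and> A \<subseteq> T} = {}" using False by blast
  moreover have "m choose card A = 0" using False by simp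
  ultimately show ?thesis by (simp only: card.empty mult_0 mult_0_right)
qed

lemma Suc_times_binomial_Suc: "Suc k * (a choose Suc k) = (a - k) * (a choose k)"
  by (metis binomial_absorption binomial_absorb_comp)

lemma binomial_ratio_Suc:
  assumes "a \<le> n"
  shows "(real n - real k) * (real (a choose Suc k) / real (n choose Suc k))
       = (real a - real k) * (real (a choose k) / real (n choose k))"
proof (cases "k \<le> a")
  case True
  have Suc_binomial: "real (x choose Suc k) = (real x - real k) * real (x choose k) / (real k + 1)"
    if "k \<le> x" for x
  proof -
    have "real (Suc k) * real (x choose Suc k) = real (x - k) * real (x choose k)"
      by (metis of_nat_mult Suc_times_binomial_Suc)
    then show ?thesis using that by (simp add: field_simps of_nat_diff)
  qed
  show ?thesis
  proof (cases "k = n")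
    case False
    have "k \<le> n" using True assms by simp
    moreover have "real n - real k \<noteq> 0" using False by simp
    moreover have "c * (x * y / e / (c * z / e)) = x * (y / z)" if "c \<noteq> 0" "e \<noteq> 0"
      for c e x y z :: real
      using that by simp
    ultimately show ?thesis unfolding Suc_binomial[OF True] Suc_binomial[OF \<open>k \<le> n\<close>]
      by simp
  qed (use True assms in simp)
qed (simp add: binomial_eq_0)

lemma uexp_add: "uexp S (\<lambda>s. f s + g s) = uexp S f + uexp S g"
  by (simp add: uexp_def sum.distrib add_divide_distrib)

lemma uexp_diff: "uexp S (\<lambda>s. f s - g s) = uexp S f - uexp S g"
  by (simp add: uexp_def sum_subtractf diff_divide_distrib)

lemma uexp_cmult: "uexp S (\<lambda>s. c * f s) = c * uexp S f"
  by (simp add: uexp_def sum_distrib_left)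

lemma uexp_const: "finite S \<Longrightarrow> S \<noteq> {} \<Longrightarrow> uexp S (\<lambda>s. c) = c"
  by (simp add: uexp_def)

lemma uexp_sum: "uexp S (\<lambda>s. \<Sum>i\<in>I. f i s) = (\<Sum>i\<in>I. uexp S (f i))"
  by (simp add: uexp_def sum.swap[of _ I] sum_divide_distrib)

lemma uexp_cong: "(\<And>s. s \<in> S \<Longrightarrow> f s = g s) \<Longrightarrow> uexp S f = uexp S g"
  by (simp add: uexp_def)

lemma ucov_eq:
  assumes "finite S" "S \<noteq> {}"
  shows "ucov S f g = uexp S (\<lambda>s. f s * g s) - uexp S f * uexp S g"
proof -
  have "ucov S f g = uexp S (\<lambda>s. f s * g s + uexp S f * uexp S g - uexp S f * g s - uexp S g * f s)"
    unfolding ucov_def by (rule uexp_cong) (simp add: algebra_simps)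
  then show ?thesis using assms by (simp add: uexp_add uexp_diff uexp_cmult uexp_const)
qed

definition true_positions :: "bool list \<Rightarrow> nat set" where
  "true_positions xs = {i. i < length xs \<and> xs ! i}"

definition all_true :: "nat set \<Rightarrow> bool list \<Rightarrow> real" where
  "all_true A xs = of_bool (A \<subseteq> true_positions xs)"

lemma all_true_mult: "all_true A xs * all_true B xs = all_true (A \<union> B) xs"
  by (simp add: all_true_def)

lemma bij_betw_true_positions_arrangements:
  "bij_betw true_positions {xs \<in> arrangements n1 n2. A \<subseteq> true_positions xs}
     {T. T \<subseteq> {..<n1 + n2} \<and> card T = n1 \<and> A \<subseteq> T}"
proof (rule bij_betw_byWitness[where f' = "\<lambda>T. map (\<lambda>i. i \<in> T) [0..<n1 + n2]"])
  show "\<forall>xs\<in>{xs \<in> arrangements n1 n2. A \<subseteq> true_positions xs}.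
          map (\<lambda>i. i \<in> true_positions xs) [0..<n1 + n2] = xs"
    by (auto simp: arrangements_def true_positions_def intro: nth_equalityI)
  show "\<forall>T\<in>{T. T \<subseteq> {..<n1 + n2} \<and> card T = n1 \<and> A \<subseteq> T}.
          true_positions (map (\<lambda>i. i \<in> T) [0..<n1 + n2]) = T"
    by (auto simp: true_positions_def)
  show "true_positions ` {xs \<in> arrangements n1 n2. A \<subseteq> true_positions xs}
          \<subseteq> {T. T \<subseteq> {..<n1 + n2} \<and> card T = n1 \<and> A \<subseteq> T}"
    by (auto simp: arrangements_def true_positions_def length_filter_conv_card)
  show "(\<lambda>T. map (\<lambda>i. i \<in> T) [0..<n1 + n2]) ` {T. T \<subseteq> {..<n1 + n2} \<and> card T = n1 \<and> A \<subseteq> T}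
          \<subseteq> {xs \<in> arrangements n1 n2. A \<subseteq> true_positions xs}"
  proof (rule image_subsetI)
    fix T assume "T \<in> {T. T \<subseteq> {..<n1 + n2} \<and> card T = n1 \<and> A \<subseteq> T}"
    then have T: "T \<subseteq> {..<n1 + n2}" "card T = n1" "A \<subseteq> T" by simp_all
    then have "true_positions (map (\<lambda>i. i \<in> T) [0..<n1 + n2]) = T"
      by (auto simp: true_positions_def)
    moreover have "{i. i < n1 + n2 \<and> map (\<lambda>i. i \<in> T) [0..<n1 + n2] ! i} = T"
      using T by (auto cong: conj_cong)
    ultimately show "map (\<lambda>i. i \<in> T) [0..<n1 + n2]
          \<in> {xs \<in> arrangements n1 n2. A \<subseteq> true_positions xs}"
      using T by (simp add: arrangements_def length_filter_conv_card)
  qed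
qed

lemma card_arrangements_all_true:
  assumes "A \<subseteq> {..<n1 + n2}"
  shows "card {xs \<in> arrangements n1 n2. A \<subseteq> true_positions xs} * ((n1 + n2) choose card A)
       = ((n1 + n2) choose n1) * (n1 choose card A)"
  using card_supersets_mult_binomial[OF finite_lessThan assms, of n1]
    bij_betw_same_card[OF bij_betw_true_positions_arrangements]
  by simp

lemma card_arrangements: "card (arrangements n1 n2) = (n1 + n2) choose n1"
  using card_arrangements_all_true[of "{}" n1 n2] by simp

lemma arrangements_nonempty: "arrangements n1 n2 \<noteq> {}"
  using card_arrangements[of n1 n2] by auto

lemma finite_arrangements: "finite (arrangements n1 n2)"
  using card_arrangements[of n1 n2] by (intro card_ge_0_finite) simp

definition all_true_prob :: "nat \<Rightarrow> nat \<Rightarrow> nat \<Rightarrow> real" where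
  "all_true_prob n1 n2 k = real (n1 choose k) / real ((n1 + n2) choose k)"

lemma uexp_all_true:
  assumes "A \<subseteq> {..<n1 + n2}"
  shows "uexp (arrangements n1 n2) (all_true A) = all_true_prob n1 n2 (card A)"
proof -
  have "(\<Sum>xs\<in>arrangements n1 n2. all_true A xs)
             = real (card {xs \<in> arrangements n1 n2. A \<subseteq> true_positions xs})"
    using finite_arrangements by (simp add: all_true_def Int_def)
  moreover have "card A \<le> n1 + n2" using card_mono[OF finite_lessThan assms] by simp
  ultimately show ?thesis
    using card_arrangements_all_true[OF assms]
    by (simp add: uexp_def all_true_prob_def card_arrangements field_simps flip: of_nat_mult)
qed

lemma all_true_prob_Suc:
  "(real (n1 + n2) - real j) * all_true_prob n1 n2 (Suc j) = (real n1 - real j) * all_true_prob n1 n2 j"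
  unfolding all_true_prob_def by (rule binomial_ratio_Suc) simp

lemma card_less_Suc_conj:
  "card {i. i < Suc L \<and> P i} = card {i. i < L \<and> P i} + of_bool (P L)"
proof -
  have "{i. i < Suc L \<and> P i} = (if P L then insert L {i. i < L \<and> P i} else {i. i < L \<and> P i})"
    by (auto simp: less_Suc_eq)
  then show ?thesis by simp
qed

lemma runs_snoc:
  "runs a (xs @ [y]) = runs a xs + of_bool (y = a \<and> (xs = [] \<or> last xs \<noteq> a))"
proof -
  have "runs a (xs @ [y]) = card {i. i < length xs \<and> xs ! i = a \<and> (i = 0 \<or> xs ! (i - 1) \<noteq> a)}
      + of_bool ((xs @ [y]) ! length xs = a \<and> (length xs = 0 \<or> (xs @ [y]) ! (length xs - 1) \<noteq> a))"
    unfolding runs_def length_append_singleton card_less_Suc_conj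
    by (auto simp: nth_append intro!: arg_cong[where f = card])
  also have "\<dots> = runs a xs + of_bool (y = a \<and> (xs = [] \<or> last xs \<noteq> a))"
    by (cases "xs = []") (auto simp: runs_def nth_append last_conv_nth)
  finally show ?thesis .
qed

definition adjacent_pairs :: "bool \<Rightarrow> bool list \<Rightarrow> nat" where
  "adjacent_pairs a xs = card {i. Suc i < length xs \<and> xs ! i = a \<and> xs ! Suc i = a}"

lemma adjacent_pairs_snoc:
  "adjacent_pairs a (xs @ [y]) = adjacent_pairs a xs + of_bool (xs \<noteq> [] \<and> last xs = a \<and> y = a)"
proof (cases xs rule: rev_exhaust)
  case (snoc ys x)
  have "{i. i < length ys \<and> (xs @ [y]) ! i = a \<and> (xs @ [y]) ! Suc i = a}
      = {i. Suc i < length xs \<and> xs ! i = a \<and> xs ! Suc i = a}"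
    by (auto simp: snoc nth_append)
  then show ?thesis
    unfolding adjacent_pairs_def snoc length_append_singleton Suc_less_eq card_less_Suc_conj
    by (simp add: nth_append snoc)
qed (simp add: adjacent_pairs_def)

lemma runs_Nil [simp]: "runs a [] = 0"
  by (simp add: runs_def)

lemma adjacent_pairs_Nil [simp]: "adjacent_pairs a [] = 0"
  by (simp add: adjacent_pairs_def)

lemma runs_singleton [simp]: "runs a [y] = of_bool (y = a)"
  using runs_snoc[of a "[]" y] by simp

lemma runs_add_adjacent_pairs: "runs a xs + adjacent_pairs a xs = length (filter ((=) a) xs)"
  by (induction xs rule: rev_induct) (auto simp: runs_snoc adjacent_pairs_snoc)

lemma runs_False_eq_runs_True:
  "xs \<noteq> [] \<Longrightarrow> int (runs False xs) = int (runs True xs) + 1 - of_bool (hd xs) - of_bool (last xs)"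
proof (induction xs rule: rev_induct)
  case (snoc y xs)
  then show ?case
    by (cases "xs = []") (auto simp: runs_snoc)
qed simp

lemma adjacent_pairs_True_eq_sum:
  "real (adjacent_pairs True xs) = (\<Sum>i<length xs - 1. all_true {i, Suc i} xs)"
proof -
  have "(\<Sum>i<length xs - 1. all_true {i, Suc i} xs)
      = real (card ({..<length xs - 1} \<inter> {i. {i, Suc i} \<subseteq> true_positions xs}))"
    unfolding all_true_def by simp
  also have "{..<length xs - 1} \<inter> {i. {i, Suc i} \<subseteq> true_positions xs}
      = {i. Suc i < length xs \<and> xs ! i = True \<and> xs ! Suc i = True}"
    by (auto simp: true_positions_def)
  finally show ?thesis by (simp add: adjacent_pairs_def)
qed

definition adjacent_true :: "nat \<Rightarrow> bool list \<Rightarrow> real" where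
  "adjacent_true m xs = (\<Sum>i<m. all_true {i, Suc i} xs)"

lemma runs_True_arrangement:
  assumes "xs \<in> arrangements n1 n2"
  shows "real (runs True xs) = real n1 - adjacent_true (n1 + n2 - 1) xs"
proof -
  have "(=) True = id" by auto
  then have "runs True xs + adjacent_pairs True xs = n1"
    using runs_add_adjacent_pairs[of True xs] assms by (simp add: arrangements_def)
  then show ?thesis
    using assms adjacent_pairs_True_eq_sum[of xs]
    by (simp add: adjacent_true_def arrangements_def flip: of_nat_add)
qed

lemma all_true_singleton: "i < length xs \<Longrightarrow> all_true {i} xs = of_bool (xs ! i)"
  by (simp add: all_true_def true_positions_def)

lemma runs_False_arrangement:
  assumes "xs \<in> arrangements n1 n2" "n1 + n2 \<noteq> 0"
  shows "real (runs False xs)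
       = real (runs True xs) + 1 - all_true {0} xs - all_true {n1 + n2 - 1} xs"
proof -
  have len: "length xs = n1 + n2" using assms(1) by (simp add: arrangements_def)
  then have "xs \<noteq> []" using assms(2) by auto
  have "real_of_int (int (runs False xs))
      = real_of_int (int (runs True xs) + 1 - of_bool (hd xs) - of_bool (last xs))"
    by (simp only: runs_False_eq_runs_True[OF \<open>xs \<noteq> []\<close>])
  then show ?thesis
    using \<open>xs \<noteq> []\<close> len assms(2)
    by (simp add: all_true_singleton hd_conv_nth last_conv_nth)
qed

lemma real_min_max_eq_of_offset:
  fixes r s :: nat
  assumes "real s = real r + 1 - of_bool a - of_bool b"
  shows "real (min r s) = real r - of_bool a * of_bool b"
    and "real (max r s) = real s + of_bool a * of_bool b"
  using assms by (cases a; cases b; auto)+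

lemma min_max_runs_arrangement:
  assumes "xs \<in> arrangements n1 n2" "n1 + n2 \<noteq> 0"
  defines "W \<equiv> adjacent_true (n1 + n2 - 1) xs"
    and "a \<equiv> all_true {0} xs" and "b \<equiv> all_true {n1 + n2 - 1} xs"
  shows "real (min (runs True xs) (runs False xs)) = real n1 - W - a * b"
    and "real (max (runs True xs) (runs False xs)) = real n1 + 1 - a - b - W + a * b"
    and "real (min (runs True xs) (runs False xs)) * real (max (runs True xs) (runs False xs))
         = (real n1 - W) * (real n1 + 1 - a - b - W)"
proof -
  note R1 = runs_True_arrangement[OF assms(1)]
  note R2 = runs_False_arrangement[OF assms(1,2)]
  show "real (min (runs True xs) (runs False xs)) = real n1 - W - a * b"
    using real_min_max_eq_of_offset(1)[OF R2[unfolded all_true_def]] R1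
    by (simp add: W_def a_def b_def all_true_def)
  show "real (max (runs True xs) (runs False xs)) = real n1 + 1 - a - b - W + a * b"
    using real_min_max_eq_of_offset(2)[OF R2[unfolded all_true_def]] R1 R2
    by (simp add: W_def a_def b_def all_true_def)
  have "real (min (runs True xs) (runs False xs)) * real (max (runs True xs) (runs False xs))
      = real (runs True xs) * real (runs False xs)"
    by (simp add: min_def max_def)
  then show "real (min (runs True xs) (runs False xs)) * real (max (runs True xs) (runs False xs))
         = (real n1 - W) * (real n1 + 1 - a - b - W)"
    using R1 R2 by (simp add: W_def a_def b_def)
qed

lemma sum_card_adjacent_Un_first:
  fixes f :: "nat \<Rightarrow> 'a::comm_semiring_1"
  shows "(\<Sum>i<Suc k. f (card ({i, Suc i} \<union> {0}))) = f 2 + of_nat k * f 3"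
proof -
  have two: "card ({0, Suc 0} \<union> {0}) = 2"
    and three: "card ({Suc i, Suc (Suc i)} \<union> {0}) = 3" for i
    by (simp_all add: numeral_2_eq_2 numeral_3_eq_3)
  show ?thesis by (simp only: sum.lessThan_Suc_shift two three) simp
qed

lemma sum_card_adjacent_Un_last:
  fixes f :: "nat \<Rightarrow> 'a::comm_semiring_1"
  shows "(\<Sum>i<Suc k. f (card ({i, Suc i} \<union> {Suc k}))) = f 2 + of_nat k * f 3"
proof -
  have two: "card ({k, Suc k} \<union> {Suc k}) = 2" by (simp add: insert_commute numeral_2_eq_2)
  have three: "i \<in> {..<k} \<Longrightarrow> card ({i, Suc i} \<union> {Suc k}) = 3" for i
    by (simp add: numeral_3_eq_3)
  have "(\<Sum>i<k. f (card ({i, Suc i} \<union> {Suc k}))) = (\<Sum>i<k. f 3)"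
    by (rule sum.cong) (simp_all only: three)
  then show ?thesis by (simp only: sum.lessThan_Suc two) (simp add: add.commute)
qed

lemma sum_card_adjacent_Un_row:
  fixes f :: "nat \<Rightarrow> 'a::comm_semiring_1"
  shows "(\<Sum>j<m. f (card ({m, Suc m} \<union> {j, Suc j})))
       = (if m = 0 then 0 else f 3 + of_nat (m - 1) * f 4)"
proof (cases m)
  case (Suc k)
  have three: "card ({Suc k, Suc (Suc k)} \<union> {k, Suc k}) = 3"
    by (simp add: insert_commute numeral_3_eq_3)
  have four: "j \<in> {..<k} \<Longrightarrow> card ({Suc k, Suc (Suc k)} \<union> {j, Suc j}) = 4" for j
    by (simp add: eval_nat_numeral)
  have "(\<Sum>j<k. f (card ({Suc k, Suc (Suc k)} \<union> {j, Suc j}))) = (\<Sum>j<k. f 4)"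
    by (rule sum.cong) (simp_all only: four)
  then show ?thesis unfolding Suc by (simp only: sum.lessThan_Suc three) (simp add: add.commute)
qed simp

lemma sum_sum_card_adjacent_Un:
  fixes f :: "nat \<Rightarrow> 'a::comm_semiring_1"
  shows "(\<Sum>i<m. \<Sum>j<m. f (card ({i, Suc i} \<union> {j, Suc j})))
       = of_nat m * f 2 + 2 * of_nat (m - 1) * f 3 + of_nat ((m - 1) * (m - 2)) * f 4"
proof (induction m)
  case (Suc m)
  have two: "card ({m, Suc m} \<union> {m, Suc m}) = 2" by (simp add: numeral_2_eq_2)
  have "(\<Sum>i<Suc m. \<Sum>j<Suc m. f (card ({i, Suc i} \<union> {j, Suc j})))
      = (\<Sum>i<m. \<Sum>j<m. f (card ({i, Suc i} \<union> {j, Suc j})))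
        + (\<Sum>i<m. f (card ({i, Suc i} \<union> {m, Suc m})))
        + (\<Sum>j<m. f (card ({m, Suc m} \<union> {j, Suc j}))) + f 2"
    by (simp only: sum.lessThan_Suc sum.distrib two) (simp add: algebra_simps)
  also have "(\<Sum>i<m. f (card ({i, Suc i} \<union> {m, Suc m})))
           = (\<Sum>j<m. f (card ({m, Suc m} \<union> {j, Suc j})))"
    by (simp only: Un_commute)
  finally have "(\<Sum>i<Suc m. \<Sum>j<Suc m. f (card ({i, Suc i} \<union> {j, Suc j})))
      = of_nat m * f 2 + 2 * of_nat (m - 1) * f 3 + of_nat ((m - 1) * (m - 2)) * f 4
        + 2 * (if m = 0 then 0 else f 3 + of_nat (m - 1) * f 4) + f 2"
    unfolding Suc.IH sum_card_adjacent_Un_row by (simp only: mult_2 add.assoc)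
  also have "\<dots> = of_nat (Suc m) * f 2 + 2 * of_nat (Suc m - 1) * f 3
      + of_nat ((Suc m - 1) * (Suc m - 2)) * f 4"
  proof (cases m)
    case (Suc k)
    have "(Suc m - 1) * (Suc m - 2) = (m - 1) * (m - 2) + 2 * (m - 1)"
      using Suc by (cases k) (simp_all add: algebra_simps)
    then have "of_nat ((Suc m - 1) * (Suc m - 2)) = (of_nat ((m - 1) * (m - 2)) + 2 * of_nat (m - 1) :: 'a)"
      by simp
    then show ?thesis using Suc by (simp add: algebra_simps)
  qed simp
  finally show ?case .
qed simp

lemma uexp_sum_all_true:
  assumes "\<And>i. i \<in> I \<Longrightarrow> F i \<subseteq> {..<n1 + n2}"
  shows "uexp (arrangements n1 n2) (\<lambda>xs. \<Sum>i\<in>I. all_true (F i) xs)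
       = (\<Sum>i\<in>I. all_true_prob n1 n2 (card (F i)))"
  using assms by (simp add: uexp_sum uexp_all_true)

lemma uexp_adjacent_true:
  assumes "m < n1 + n2"
  shows "uexp (arrangements n1 n2) (adjacent_true m) = real m * all_true_prob n1 n2 2"
proof -
  have two: "card {i, Suc i} = 2" for i :: nat by simp
  have "uexp (arrangements n1 n2) (adjacent_true m) = (\<Sum>i<m. all_true_prob n1 n2 (card {i, Suc i}))"
    unfolding adjacent_true_def using assms by (intro uexp_sum_all_true) auto
  then show ?thesis by (simp only: two) simp
qed

lemma uexp_adjacent_true_mult_first:
  assumes "Suc k < n1 + n2"
  shows "uexp (arrangements n1 n2) (\<lambda>xs. adjacent_true (Suc k) xs * all_true {0} xs)
       = all_true_prob n1 n2 2 + real k * all_true_prob n1 n2 3"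
proof -
  have "uexp (arrangements n1 n2) (\<lambda>xs. adjacent_true (Suc k) xs * all_true {0} xs)
      = uexp (arrangements n1 n2) (\<lambda>xs. \<Sum>i<Suc k. all_true ({i, Suc i} \<union> {0}) xs)"
    by (simp only: adjacent_true_def sum_distrib_right all_true_mult)
  also have "\<dots> = (\<Sum>i<Suc k. all_true_prob n1 n2 (card ({i, Suc i} \<union> {0})))"
    using assms by (intro uexp_sum_all_true) auto
  finally show ?thesis by (simp only: sum_card_adjacent_Un_first)
qed

lemma uexp_adjacent_true_mult_last:
  assumes "Suc k < n1 + n2"
  shows "uexp (arrangements n1 n2) (\<lambda>xs. adjacent_true (Suc k) xs * all_true {Suc k} xs)
       = all_true_prob n1 n2 2 + real k * all_true_prob n1 n2 3"
proof -
  have "uexp (arrangements n1 n2) (\<lambda>xs. adjacent_true (Suc k) xs * all_true {Suc k} xs)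
      = uexp (arrangements n1 n2) (\<lambda>xs. \<Sum>i<Suc k. all_true ({i, Suc i} \<union> {Suc k}) xs)"
    by (simp only: adjacent_true_def sum_distrib_right all_true_mult)
  also have "\<dots> = (\<Sum>i<Suc k. all_true_prob n1 n2 (card ({i, Suc i} \<union> {Suc k})))"
    using assms by (intro uexp_sum_all_true) auto
  finally show ?thesis by (simp only: sum_card_adjacent_Un_last)
qed

lemma uexp_adjacent_true_square:
  assumes "m < n1 + n2"
  shows "uexp (arrangements n1 n2) (\<lambda>xs. adjacent_true m xs * adjacent_true m xs)
       = real m * all_true_prob n1 n2 2 + 2 * real (m - 1) * all_true_prob n1 n2 3
         + real ((m - 1) * (m - 2)) * all_true_prob n1 n2 4"
proof -
  have "uexp (arrangements n1 n2) (\<lambda>xs. adjacent_true m xs * adjacent_true m xs)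
      = uexp (arrangements n1 n2) (\<lambda>xs. \<Sum>i<m. \<Sum>j<m. all_true ({i, Suc i} \<union> {j, Suc j}) xs)"
    by (simp add: adjacent_true_def sum_product all_true_mult)
  also have "\<dots> = (\<Sum>i<m. \<Sum>j<m. all_true_prob n1 n2 (card ({i, Suc i} \<union> {j, Suc j})))"
    using assms by (simp add: uexp_sum uexp_all_true)
  finally show ?thesis by (simp only: sum_sum_card_adjacent_Un)
qed

context
  fixes n1 n2 k :: nat
  assumes total: "n1 + n2 = Suc (Suc k)"
begin

lemma uexp_all_true_ends:
  shows "uexp (arrangements n1 n2) (all_true {0}) = all_true_prob n1 n2 1"
    and "uexp (arrangements n1 n2) (all_true {Suc k}) = all_true_prob n1 n2 1"
    and "uexp (arrangements n1 n2) (\<lambda>xs. all_true {0} xs * all_true {Suc k} xs)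
         = all_true_prob n1 n2 2"
  using total by (simp_all add: all_true_mult uexp_all_true numeral_2_eq_2)

lemma uexp_min_runs:
  "uexp (arrangements n1 n2) (\<lambda>xs. real (min (runs True xs) (runs False xs)))
   = real n1 - (real k + 2) * all_true_prob n1 n2 2"
proof -
  have "uexp (arrangements n1 n2) (\<lambda>xs. real (min (runs True xs) (runs False xs)))
      = uexp (arrangements n1 n2)
          (\<lambda>xs. real n1 - adjacent_true (Suc k) xs - all_true {0} xs * all_true {Suc k} xs)"
    using total by (intro uexp_cong) (simp add: min_max_runs_arrangement(1))
  also have "\<dots> = real n1 - uexp (arrangements n1 n2) (adjacent_true (Suc k))
      - uexp (arrangements n1 n2) (\<lambda>xs. all_true {0} xs * all_true {Suc k} xs)"
    by (simp only: uexp_diff uexp_const[OF finite_arrangements arrangements_nonempty])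
  finally show ?thesis
    using total by (simp add: uexp_all_true_ends uexp_adjacent_true algebra_simps)
qed

lemma uexp_max_runs:
  "uexp (arrangements n1 n2) (\<lambda>xs. real (max (runs True xs) (runs False xs)))
   = real n1 + 1 - 2 * all_true_prob n1 n2 1 - real k * all_true_prob n1 n2 2"
proof -
  have "uexp (arrangements n1 n2) (\<lambda>xs. real (max (runs True xs) (runs False xs)))
      = uexp (arrangements n1 n2) (\<lambda>xs. real n1 + 1 - all_true {0} xs - all_true {Suc k} xs
          - adjacent_true (Suc k) xs + all_true {0} xs * all_true {Suc k} xs)"
    using total by (intro uexp_cong) (simp add: min_max_runs_arrangement(2))
  also have "\<dots> = real n1 + 1 - uexp (arrangements n1 n2) (all_true {0})
      - uexp (arrangements n1 n2) (all_true {Suc k}) - uexp (arrangements n1 n2) (adjacent_true (Suc k))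
      + uexp (arrangements n1 n2) (\<lambda>xs. all_true {0} xs * all_true {Suc k} xs)"
    by (simp only: uexp_add uexp_diff uexp_const[OF finite_arrangements arrangements_nonempty])
  finally show ?thesis
    using total by (simp add: uexp_all_true_ends uexp_adjacent_true algebra_simps)
qed

lemma uexp_min_mult_max_runs:
  "uexp (arrangements n1 n2)
     (\<lambda>xs. real (min (runs True xs) (runs False xs)) * real (max (runs True xs) (runs False xs)))
   = real n1 * (real n1 + 1) - 2 * real n1 * all_true_prob n1 n2 1
     - (2 * real n1 + 1) * (real k + 1) * all_true_prob n1 n2 2
     + 2 * (all_true_prob n1 n2 2 + real k * all_true_prob n1 n2 3)
     + (real k + 1) * all_true_prob n1 n2 2 + 2 * (real k * all_true_prob n1 n2 3)
     + real (k * (k - 1)) * all_true_prob n1 n2 4"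
proof -
  let ?E = "uexp (arrangements n1 n2)"
  have "?E (\<lambda>xs. real (min (runs True xs) (runs False xs)) * real (max (runs True xs) (runs False xs)))
      = ?E (\<lambda>xs. real n1 * (real n1 + 1) - real n1 * all_true {0} xs - real n1 * all_true {Suc k} xs
          - (2 * real n1 + 1) * adjacent_true (Suc k) xs
          + adjacent_true (Suc k) xs * all_true {0} xs + adjacent_true (Suc k) xs * all_true {Suc k} xs
          + adjacent_true (Suc k) xs * adjacent_true (Suc k) xs)"
  proof (rule uexp_cong)
    fix xs assume "xs \<in> arrangements n1 n2"
    from min_max_runs_arrangement(3)[OF this] total
    show "real (min (runs True xs) (runs False xs)) * real (max (runs True xs) (runs False xs))
        = real n1 * (real n1 + 1) - real n1 * all_true {0} xs - real n1 * all_true {Suc k} xs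
          - (2 * real n1 + 1) * adjacent_true (Suc k) xs
          + adjacent_true (Suc k) xs * all_true {0} xs + adjacent_true (Suc k) xs * all_true {Suc k} xs
          + adjacent_true (Suc k) xs * adjacent_true (Suc k) xs"
      by (simp add: algebra_simps)
  qed
  also have "\<dots> = real n1 * (real n1 + 1) - real n1 * ?E (all_true {0}) - real n1 * ?E (all_true {Suc k})
      - (2 * real n1 + 1) * ?E (adjacent_true (Suc k))
      + ?E (\<lambda>xs. adjacent_true (Suc k) xs * all_true {0} xs)
      + ?E (\<lambda>xs. adjacent_true (Suc k) xs * all_true {Suc k} xs)
      + ?E (\<lambda>xs. adjacent_true (Suc k) xs * adjacent_true (Suc k) xs)"
    by (simp only: uexp_add uexp_diff uexp_cmult uexp_const[OF finite_arrangements arrangements_nonempty])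
  finally show ?thesis
    using total
    by (simp add: uexp_all_true_ends uexp_adjacent_true uexp_adjacent_true_mult_first
        uexp_adjacent_true_mult_last uexp_adjacent_true_square algebra_simps)
qed

lemma all_true_prob_values:
  defines "x \<equiv> real n1" and "s \<equiv> real k + 2" and "t \<equiv> real k + 1"
  shows "all_true_prob n1 n2 1 = x / s"
    and "all_true_prob n1 n2 2 = x * (x - 1) / (s * t)"
    and "real k * all_true_prob n1 n2 3 = x * (x - 1) * (x - 2) / (s * t)"
    and "real (k * (k - 1)) * all_true_prob n1 n2 4 = x * (x - 1) * (x - 2) * (x - 3) / (s * t)"
proof -
  have N: "real (n1 + n2) = s" using total by (simp add: s_def)
  have rec: "(s - real j) * all_true_prob n1 n2 (Suc j) = (x - real j) * all_true_prob n1 n2 j" for j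
    using all_true_prob_Suc[of n1 n2 j, unfolded N] by (simp add: x_def)
  show p1: "all_true_prob n1 n2 1 = x / s"
    using N by (simp add: all_true_prob_def x_def)
  have "t * all_true_prob n1 n2 2 = (x - 1) * all_true_prob n1 n2 1"
    using rec[of 1] by (simp add: s_def t_def numeral_2_eq_2 add.commute)
  moreover have "t \<noteq> 0" "s \<noteq> 0" by (simp_all add: s_def t_def)
  ultimately show p2: "all_true_prob n1 n2 2 = x * (x - 1) / (s * t)"
    unfolding p1 by (simp add: field_simps)
  have p3: "real k * all_true_prob n1 n2 3 = (x - 2) * all_true_prob n1 n2 2"
    using rec[of 2] by (simp add: s_def numeral_3_eq_3)
  then show "real k * all_true_prob n1 n2 3 = x * (x - 1) * (x - 2) / (s * t)"
    unfolding p2 by simp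
  have p4: "(real k - 1) * all_true_prob n1 n2 4 = (x - 3) * all_true_prob n1 n2 3"
    using rec[of 3] by (simp add: s_def eval_nat_numeral)
  have "real (k * (k - 1)) * all_true_prob n1 n2 4 = real k * ((real k - 1) * all_true_prob n1 n2 4)"
    by (cases k) (simp_all add: algebra_simps)
  also have "\<dots> = (x - 3) * (real k * all_true_prob n1 n2 3)"
    unfolding p4 by (rule mult.left_commute)
  finally show "real (k * (k - 1)) * all_true_prob n1 n2 4 = x * (x - 1) * (x - 2) * (x - 3) / (s * t)"
    unfolding p3 p2 by simp
qed

end

text \<open>The expression \<open>E[min \<cdot> max] - E[min] E[max]\<close> obtained from the moments above,
  with \<open>x = n\<^sub>1\<close> and \<open>k = n - 2\<close>.\<close>
lemma min_max_runs_covariance_identity: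
  fixes x k :: real
  assumes "0 \<le> k"
  defines "s \<equiv> k + 2" and "t \<equiv> k + 1"
  shows "x * (x + 1) - 2 * x * (x / s) - (2 * x + 1) * t * (x * (x - 1) / (s * t))
           + 2 * (x * (x - 1) / (s * t) + x * (x - 1) * (x - 2) / (s * t))
           + t * (x * (x - 1) / (s * t)) + 2 * (x * (x - 1) * (x - 2) / (s * t))
           + x * (x - 1) * (x - 2) * (x - 3) / (s * t)
           - (x - s * (x * (x - 1) / (s * t))) * (x + 1 - 2 * (x / s) - k * (x * (x - 1) / (s * t)))
         = x * (s - x) * (x - 1) * (t - x) / (s * t^2)"
proof -
  have nonzero: "s \<noteq> 0" "t \<noteq> 0" using assms(1) unfolding s_def t_def by linarith+
  have shift: "k = t - 1" "s = t + 1" unfolding s_def t_def by simp_all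
  from nonzero show ?thesis
    by (simp add: field_simps) (simp add: shift algebra_simps power2_eq_square)
qed

theorem theorem3:
  fixes n1 n2 :: nat
  assumes "n1 \<ge> 1" and "n2 \<ge> 1"
  defines "n \<equiv> n1 + n2"
  shows "ucov (arrangements n1 n2)
           (\<lambda>xs. real (min (runs True xs) (runs False xs)))
           (\<lambda>xs. real (max (runs True xs) (runs False xs)))
         = real (n1 * n2 * (n1 - 1) * (n2 - 1)) / (real n * (real n - 1)^2)"
proof -
  define k where "k = n1 + n2 - 2"
  have total: "n1 + n2 = Suc (Suc k)" using assms(1,2) by (simp add: k_def)
  have "ucov (arrangements n1 n2)
           (\<lambda>xs. real (min (runs True xs) (runs False xs)))
           (\<lambda>xs. real (max (runs True xs) (runs False xs)))
      = real n1 * (real k + 2 - real n1) * (real n1 - 1) * (real k + 1 - real n1)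
          / ((real k + 2) * (real k + 1)^2)"
    unfolding ucov_eq[OF finite_arrangements arrangements_nonempty]
      uexp_min_runs[OF total] uexp_max_runs[OF total] uexp_min_mult_max_runs[OF total]
      all_true_prob_values[OF total]
    by (rule min_max_runs_covariance_identity) simp
  also have "\<dots> = real (n1 * n2 * (n1 - 1) * (n2 - 1)) / (real n * (real n - 1)^2)"
  proof -
    have "real n = real k + 2" "real n - 1 = real k + 1" "real n2 = real k + 2 - real n1"
      "real (n1 - 1) = real n1 - 1" "real (n2 - 1) = real k + 1 - real n1"
      using total assms(1,2) by (simp_all add: n_def of_nat_diff)
    then show ?thesis by (simp only: of_nat_mult)
  qed
  finally show ?thesis .
qed

end
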